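(* Let $B(x)=\sum_{n\ge 0} b(n)x^n$ be a formal power series with $b(0)\neq 0$, let $B^{\Delta}(n,k)$ be the composita of $xB(x)$ (so in particular $B^{\Delta}(1,1)=b(0)$), and let $A(x)=1/B(x)$ be the reciprocal series, i.e. $A(x)B(x)=1$. Then the composita $A^{\Delta}(n,m)$ of $xA(x)$ is, for $n\ge m\ge 1$, $$A^{\Delta}(n,m)=\begin{cases}\dfrac{1}{B^{\Delta}(1,1)^m}, & n=m,\\[6pt] \dfrac{1}{B^{\Delta}(1,1)^m}\displaystyle\sum_{k=1}^{n-m}\binom{m+k-1}{m-1}\sum_{j=1}^{k}\frac{(-1)^j}{B^{\Delta}(1,1)^j}\binom{k}{j}B^{\Delta}(n-m+j,j), & n>m.\end{cases}$$
   Context: All generating functions are formal power series in $x$. For a power series $F(x)=\sum_{n\ge 1} f(n)x^n$ with zero constant term, its composita is the two-variable function $F^{\Delta}(n,k)$ ($n\ge k\ge 1$) defined by $F^{\Delta}(n,k)=\sum_{\lambda_1+\cdots+\lambda_k=n}f(\lambda_1)f(\lambda_2)\cdots f(\lambda_k)$, where the sum runs over all compositions of $n$ into exactly $k$ positive integer parts; equivalently $[F(x)]^k=\sum_{n\ge k}F^{\Delta}(n,k)x^n$. *)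

theory Defs
  imports "HOL-Computational_Algebra.Formal_Power_Series"
begin

definition compositions :: "nat \<Rightarrow> nat \<Rightarrow> nat list set" where
  "compositions n k = {xs. length xs = k \<and> (\<forall>x\<in>set xs. 0 < x) \<and> sum_list xs = n}"

definition composita :: "'a::comm_semiring_1 fps \<Rightarrow> nat \<Rightarrow> nat \<Rightarrow> 'a" where
  "composita F n k = (\<Sum>xs\<in>compositions n k. prod_list (map (fps_nth F) xs))"

end

theory Submission
  imports Defs
begin

(* Write c = b(0) and E = 1 - B/c, so E has zero constant term and
   B = c (1 - E).  Then A = 1/B = c^{-1} (1 - E)^{-1}, hence
     c^m A^m = (1 - E)^{-m} = sum_k C(m+k-1, m-1) E^k,
   i.e. c^m A^m is the negative binomial series G_m(x) = (1 - x)^{-m} composed with E.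
   Expanding E^k = (1 - B/c)^k by the binomial theorem and reading off coefficients
   gives the double sum of the theorem for the coefficients of A^m.
   Finally the composita of x F(x) is just a shifted coefficient of F^k. *)

unbundle fps_syntax

lemma compositions_Suc:
  "compositions n (Suc k) = (\<Union>l\<in>{1..n}. (#) l ` compositions (n - l) k)"
proof (rule set_eqI, rule iffI)
  fix xs assume "xs \<in> compositions n (Suc k)"
  then obtain x ys where xs: "xs = x # ys"
    and "length ys = k" "\<forall>y\<in>set ys. 0 < y" "0 < x" "x + sum_list ys = n"
    unfolding compositions_def by (cases xs) auto
  then have "ys \<in> compositions (n - x) k" and "x \<in> {1..n}"
    unfolding compositions_def by simp_all
  then show "xs \<in> (\<Union>l\<in>{1..n}. (#) l ` compositions (n - l) k)"
    unfolding xs by blast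
next
  fix xs assume "xs \<in> (\<Union>l\<in>{1..n}. (#) l ` compositions (n - l) k)"
  then obtain l ys where "l \<in> {1..n}" "ys \<in> compositions (n - l) k" "xs = l # ys"
    by blast
  then show "xs \<in> compositions n (Suc k)"
    unfolding compositions_def by auto
qed

lemma compositions_0: "compositions n 0 = (if n = 0 then {[]} else {})"
  unfolding compositions_def by auto

lemma finite_compositions: "finite (compositions n k)"
proof (rule finite_subset)
  show "compositions n k \<subseteq> {xs. set xs \<subseteq> {0..n} \<and> length xs = k}"
    unfolding compositions_def using member_le_sum_list by fastforce
  show "finite {xs. set xs \<subseteq> {0..n} \<and> length xs = k}"
    by (rule finite_lists_length_eq) simp
qed

lemma composita_eq_power_nth:
  fixes F :: "'a::comm_semiring_1 fps"
  assumes F0: "F $ 0 = 0"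
  shows "composita F n k = (F ^ k) $ n"
proof (induction k arbitrary: n)
  case 0
  then show ?case by (simp add: composita_def compositions_0)
next
  case (Suc k)
  have first_part: "(\<Sum>xs\<in>(#) l ` compositions (n - l) k. prod_list (map (fps_nth F) xs))
      = F $ l * composita F (n - l) k" for l
  proof -
    have "(\<Sum>xs\<in>(#) l ` compositions (n - l) k. prod_list (map (fps_nth F) xs))
        = (\<Sum>xs\<in>compositions (n - l) k. prod_list (map (fps_nth F) (l # xs)))"
      by (rule sum.reindex_cong[where l = "(#) l"]) auto
    then show ?thesis by (simp add: composita_def sum_distrib_left)
  qed
  have "composita F n (Suc k)
      = (\<Sum>l\<in>{1..n}. \<Sum>xs\<in>(#) l ` compositions (n - l) k. prod_list (map (fps_nth F) xs))"
    unfolding composita_def compositions_Suc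
    by (rule sum.UNION_disjoint) (simp_all add: finite_compositions, blast)
  also have "\<dots> = (\<Sum>l\<in>{1..n}. F $ l * (F ^ k) $ (n - l))"
    by (simp add: first_part Suc.IH)
  also have "\<dots> = (\<Sum>l=0..n. F $ l * (F ^ k) $ (n - l))"
    by (subst sum.atLeast_Suc_atMost[of 0 n]) (simp_all add: F0)
  also have "\<dots> = (F ^ Suc k) $ n"
    by (simp add: fps_mult_nth)
  finally show ?case .
qed

lemma composita_X_mult:
  fixes F :: "'a::comm_semiring_1 fps"
  assumes "k \<le> n"
  shows "composita (fps_X * F) n k = (F ^ k) $ (n - k)"
  using assms
  by (simp add: composita_eq_power_nth power_mult_distrib fps_X_power_mult_nth)

(* The negative binomial series G_m(x) = sum_k C(m+k-1, m-1) x^k = (1 - x)^{-m}. *)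
definition neg_binomial_fps :: "nat \<Rightarrow> 'a::comm_ring_1 fps" where
  "neg_binomial_fps m = Abs_fps (\<lambda>k. of_nat ((m + k - 1) choose (m - 1)))"

lemma mult_1_minus_X_nth:
  fixes f :: "'a::comm_ring_1 fps"
  shows "(f * (1 - fps_X)) $ k = f $ k - (if k = 0 then 0 else f $ (k - 1))"
proof -
  have "f * (1 - fps_X) = f - fps_X * f" by (simp add: algebra_simps)
  then show ?thesis by simp
qed

(* Pascal's rule in series form: G_{p+2} (1 - x) = G_{p+1}. *)
lemma neg_binomial_fps_step:
  "(neg_binomial_fps (Suc (Suc p)) :: 'a::comm_ring_1 fps) * (1 - fps_X) = neg_binomial_fps (Suc p)"
proof (rule fps_ext)
  fix k
  show "(neg_binomial_fps (Suc (Suc p)) * (1 - fps_X)) $ k = (neg_binomial_fps (Suc p) :: 'a fps) $ k"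
  proof (cases k)
    case 0
    then show ?thesis by (simp add: mult_1_minus_X_nth neg_binomial_fps_def binomial_eq_0)
  next
    case (Suc q)
    have "Suc (p + Suc q) choose Suc p = (p + Suc q choose p) + (p + Suc q choose Suc p)"
      by (rule binomial_Suc_Suc)
    then show ?thesis
      using Suc by (simp add: mult_1_minus_X_nth neg_binomial_fps_def)
  qed
qed

lemma neg_binomial_fps_inverse:
  assumes "1 \<le> m"
  shows "(neg_binomial_fps m :: 'a::comm_ring_1 fps) * (1 - fps_X) ^ m = 1"
proof -
  obtain p where m: "m = Suc p" using assms by (cases m) auto
  have "(neg_binomial_fps (Suc p) :: 'a fps) * (1 - fps_X) ^ Suc p = 1"
  proof (induction p)
    case 0
    show ?case by (rule fps_ext) (simp add: mult_1_minus_X_nth neg_binomial_fps_def)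
  next
    case (Suc p)
    have "(neg_binomial_fps (Suc (Suc p)) :: 'a fps) * (1 - fps_X) ^ Suc (Suc p)
        = (neg_binomial_fps (Suc (Suc p)) * (1 - fps_X)) * (1 - fps_X) ^ Suc p"
      by (simp only: power_Suc mult.assoc)
    also have "\<dots> = 1" by (simp only: neg_binomial_fps_step Suc.IH)
    finally show ?case .
  qed
  then show ?thesis by (simp only: m)
qed

lemma neg_binomial_fps_compose_inverse:
  fixes E :: "'a::idom fps"
  assumes E0: "E $ 0 = 0" and "1 \<le> m"
  shows "(neg_binomial_fps m oo E) * (1 - E) ^ m = 1"
proof -
  have "(1 - fps_X) oo E = 1 - E"
    using E0 by (simp add: fps_compose_sub_distrib)
  then have "(1 - E) ^ m = (1 - fps_X) ^ m oo E"
    by (simp add: fps_compose_power[OF E0, symmetric])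
  then have "(neg_binomial_fps m oo E) * (1 - E) ^ m = (neg_binomial_fps m * (1 - fps_X) ^ m) oo E"
    by (simp add: fps_compose_mult_distrib[OF E0])
  also have "\<dots> = 1"
    using assms(2) by (simp add: neg_binomial_fps_inverse)
  finally show ?thesis .
qed

lemma fps_inverse_unique:
  fixes P Q U :: "'a::comm_ring_1 fps"
  assumes "P * U = 1" and "Q * U = 1"
  shows "P = Q"
proof -
  have "P = P * (Q * U)" using assms(2) by simp
  also have "\<dots> = Q * (P * U)" by (simp only: ac_simps)
  finally show ?thesis using assms(1) by simp
qed

lemma reciprocal_power_eq_neg_binomial_compose:
  fixes A B :: "'a::field fps"
  assumes B0: "B $ 0 \<noteq> 0" and AB: "A * B = 1" and m: "1 \<le> m"
  defines "E \<equiv> 1 - fps_const (inverse (B $ 0)) * B"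
  shows "fps_const ((B $ 0) ^ m) * A ^ m = neg_binomial_fps m oo E"
proof (rule fps_inverse_unique)
  have B_eq: "B = fps_const (B $ 0) * (1 - E)"
    using B0 by (simp add: E_def mult.assoc[symmetric] fps_const_mult[symmetric])
  have "fps_const ((B $ 0) ^ m) * A ^ m * (1 - E) ^ m = (A * (fps_const (B $ 0) * (1 - E))) ^ m"
    by (simp add: power_mult_distrib fps_const_power ac_simps)
  also have "\<dots> = 1" using AB B_eq by simp
  finally show "fps_const ((B $ 0) ^ m) * A ^ m * (1 - E) ^ m = 1" .
  have "E $ 0 = 0" using B0 by (simp add: E_def)
  then show "(neg_binomial_fps m oo E) * (1 - E) ^ m = 1"
    using m by (rule neg_binomial_fps_compose_inverse)
qed

lemma one_minus_scaled_power_nth: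
  fixes B :: "'a::field fps"
  assumes "0 < N"
  shows "((1 - fps_const (inverse c) * B) ^ k) $ N
       = (\<Sum>j=1..k. (-1) ^ j / c ^ j * of_nat (k choose j) * (B ^ j) $ N)"
proof -
  have "(1 - fps_const (inverse c) * B) ^ k = (fps_const (- inverse c) * B + 1) ^ k"
    by (simp flip: fps_const_neg)
  also have "\<dots> = (\<Sum>j\<le>k. fps_const (of_nat (k choose j) * (- inverse c) ^ j) * B ^ j)"
    by (simp add: binomial_ring power_mult_distrib fps_const_power fps_of_nat
        flip: fps_const_mult) (simp add: ac_simps)
  finally have "((1 - fps_const (inverse c) * B) ^ k) $ N
      = (\<Sum>j=0..k. of_nat (k choose j) * (- inverse c) ^ j * (B ^ j) $ N)"
    by (simp add: fps_sum_nth atMost_atLeast0)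
  also have "\<dots> = (\<Sum>j=1..k. of_nat (k choose j) * (- inverse c) ^ j * (B ^ j) $ N)"
    using assms by (subst sum.atLeast_Suc_atMost) simp_all
  also have "\<dots> = (\<Sum>j=1..k. (-1) ^ j / c ^ j * of_nat (k choose j) * (B ^ j) $ N)"
  proof (rule sum.cong[OF refl])
    fix j
    have "(- inverse c) ^ j = (-1) ^ j / c ^ j"
      by (subst power_minus) (simp add: power_inverse divide_inverse)
    then show "of_nat (k choose j) * (- inverse c) ^ j * (B ^ j) $ N
             = (-1) ^ j / c ^ j * of_nat (k choose j) * (B ^ j) $ N"
      by simp
  qed
  finally show ?thesis .
qed

lemma reciprocal_power_nth:
  fixes A B :: "'a::field fps"
  assumes B0: "B $ 0 \<noteq> 0" and AB: "A * B = 1" and m: "1 \<le> m" and N: "0 < N"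
  shows "(A ^ m) $ N = 1 / (B $ 0) ^ m *
    (\<Sum>k=1..N. of_nat ((m + k - 1) choose (m - 1)) *
       (\<Sum>j=1..k. (-1) ^ j / (B $ 0) ^ j * of_nat (k choose j) * (B ^ j) $ N))"
proof -
  define E where "E = 1 - fps_const (inverse (B $ 0)) * B"
  have "(A ^ m) $ N = 1 / (B $ 0) ^ m * ((B $ 0) ^ m * (A ^ m) $ N)"
    using B0 by simp
  also have "(B $ 0) ^ m * (A ^ m) $ N = (neg_binomial_fps m oo E) $ N"
    using reciprocal_power_eq_neg_binomial_compose[OF B0 AB m]
    by (metis E_def fps_mult_left_const_nth)
  also have "\<dots> = (\<Sum>k=0..N. of_nat ((m + k - 1) choose (m - 1)) * (E ^ k) $ N)"
    by (simp add: fps_compose_nth neg_binomial_fps_def)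
  also have "\<dots> = (\<Sum>k=1..N. of_nat ((m + k - 1) choose (m - 1)) *
       (\<Sum>j=1..k. (-1) ^ j / (B $ 0) ^ j * of_nat (k choose j) * (B ^ j) $ N))"
    (* the k = 0 term vanishes since its inner sum is empty *)
    unfolding E_def one_minus_scaled_power_nth[OF N]
    by (subst sum.atLeast_Suc_atMost) simp_all
  finally show ?thesis .
qed

lemma reciprocal_power_nth_0:
  fixes A B :: "'a::field fps"
  assumes "A * B = 1"
  shows "(A ^ m) $ 0 = 1 / (B $ 0) ^ m"
proof -
  have "A $ 0 * B $ 0 = 1" using arg_cong[OF assms, of "\<lambda>F. F $ 0"] by simp
  then have "A $ 0 = 1 / B $ 0"
    by (metis divide_eq_eq mult_zero_right zero_neq_one)
  then show ?thesis by (simp add: fps_nth_power_0 power_one_over)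
qed

theorem theorem2:
  fixes A B :: "'a::field fps" and n m :: nat
  assumes "fps_nth B 0 \<noteq> 0"
    and "A * B = 1"
    and "1 \<le> m" and "m \<le> n"
  shows "composita (fps_X * A) n m =
    (if n = m then 1 / composita (fps_X * B) 1 1 ^ m
     else 1 / composita (fps_X * B) 1 1 ^ m *
       (\<Sum>k=1..n-m. of_nat ((m+k-1) choose (m-1)) *
          (\<Sum>j=1..k. (-1)^j / composita (fps_X * B) 1 1 ^ j * of_nat (k choose j)
                       * composita (fps_X * B) (n-m+j) j)))"
proof -
  have lhs: "composita (fps_X * A) n m = (A ^ m) $ (n - m)"
    using assms(4) by (rule composita_X_mult)
  have b0: "composita (fps_X * B) 1 1 = B $ 0"
    by (simp add: composita_X_mult)
  have coeffs: "composita (fps_X * B) (n - m + j) j = (B ^ j) $ (n - m)" for j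
    by (simp add: composita_X_mult)
  show ?thesis
  proof (cases "n = m")
    case True
    then show ?thesis
      unfolding b0 lhs using reciprocal_power_nth_0[OF assms(2)] by simp
  next
    case False
    then have "0 < n - m" using assms(4) by simp
    then show ?thesis
      unfolding b0 coeffs lhs using reciprocal_power_nth[OF assms(1-3)] False by simp
  qed
qed

end
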